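(* Let $(X,d)$ be a compact metric space and $f:X\to X$ continuous. Then the relation $\sim$ on $CR(f)$ is an equivalence relation, the set $R=\{(x,y)\in CR(f)^2: x\sim y\}$ is closed in $CR(f)^2$, and $(f\times f)(R)\subset R$.
   Context: For $\delta>0$, a finite sequence $(x_i)_{i=0}^k$ ($k\ge1$) is a $\delta$-chain of $f$ if $d(f(x_i),x_{i+1})\le\delta$ for $0\le i\le k-1$; it is a $\delta$-cycle if moreover $x_0=x_k$. $CR(f)$ is the set of chain recurrent points: $x\in CR(f)$ iff for every $\delta>0$ there is a $\delta$-cycle $(x_i)_{i=0}^k$ with $x_0=x_k=x$. For $x,y\in CR(f)$, $x\sim y$ iff for every $\delta>0$ there are integers $m>0$, $N>0$ such that for every integer $n\ge N$ there are $\delta$-chains $(x_i)_{i=0}^{mn},(y_i)_{i=0}^{mn}$ of $f$ consisting of points of $CR(f)$ with $x_0=y_{mn}=x$ and $x_{mn}=y_0=y$. *)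

theory Defs
  imports "HOL-Analysis.Analysis"
begin

definition delta_chain :: "'a::metric_space set \<Rightarrow> ('a \<Rightarrow> 'a) \<Rightarrow> real \<Rightarrow> (nat \<Rightarrow> 'a) \<Rightarrow> nat \<Rightarrow> bool" where
  "delta_chain X f \<delta> c k \<longleftrightarrow>
     (\<forall>i\<le>k. c i \<in> X) \<and> (\<forall>i<k. dist (f (c i)) (c (Suc i)) \<le> \<delta>)"

definition CR :: "'a::metric_space set \<Rightarrow> ('a \<Rightarrow> 'a) \<Rightarrow> 'a set" where
  "CR X f = {x \<in> X. \<forall>\<delta>>0. \<exists>k\<ge>1. \<exists>c. delta_chain X f \<delta> c k \<and> c 0 = x \<and> c k = x}"

definition cr_rel :: "'a::metric_space set \<Rightarrow> ('a \<Rightarrow> 'a) \<Rightarrow> 'a \<Rightarrow> 'a \<Rightarrow> bool" where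
  "cr_rel X f x y \<longleftrightarrow> x \<in> CR X f \<and> y \<in> CR X f \<and>
     (\<forall>\<delta>>0. \<exists>m>0. \<exists>N>0. \<forall>n\<ge>N. \<exists>xs ys.
        delta_chain X f \<delta> xs (m * n) \<and> delta_chain X f \<delta> ys (m * n) \<and>
        (\<forall>i\<le>m * n. xs i \<in> CR X f \<and> ys i \<in> CR X f) \<and>
        xs 0 = x \<and> ys (m * n) = x \<and> xs (m * n) = y \<and> ys 0 = y)"

end

theory Submission
  imports Defs
begin

text \<open>Uniform continuity of \<open>f\<close> on the compact set \<open>X\<close> gives two robustness facts: a
  sufficiently fine chain remains a \<open>\<delta>\<close>-chain after each of its points is moved slightly, and
  its image under \<open>f\<close> is again a \<open>\<delta>\<close>-chain. The first yields closedness of the relation (move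
  the endpoints of chains between nearby related pairs) and, with compactness, shows that points
  on very fine cycles lie close to \<open>CR(f)\<close>; hence a cycle through a chain recurrent point can be
  pushed into \<open>CR(f)\<close>, and repeating it gives reflexivity. The second gives invariance under
  \<open>f \<times> f\<close>. For transitivity, with \<open>n = N\<^sub>1 + d\<close>, chains of lengths \<open>m\<^sub>1(m\<^sub>2N\<^sub>1)\<close> and
  \<open>m\<^sub>2(m\<^sub>1d)\<close> concatenate to length \<open>m\<^sub>1m\<^sub>2n\<close>.\<close>

definition CR_chain ::
    "'a::metric_space set \<Rightarrow> ('a \<Rightarrow> 'a) \<Rightarrow> real \<Rightarrow> (nat \<Rightarrow> 'a) \<Rightarrow> nat \<Rightarrow> 'a \<Rightarrow> 'a \<Rightarrow> bool" where
  "CR_chain X f \<delta> c k a b \<longleftrightarrow>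
     delta_chain X f \<delta> c k \<and> (\<forall>i\<le>k. c i \<in> CR X f) \<and> c 0 = a \<and> c k = b"

definition has_delta_cycle :: "'a::metric_space set \<Rightarrow> ('a \<Rightarrow> 'a) \<Rightarrow> real \<Rightarrow> 'a \<Rightarrow> bool" where
  "has_delta_cycle X f \<delta> x \<longleftrightarrow> (\<exists>k\<ge>1. \<exists>c. delta_chain X f \<delta> c k \<and> c 0 = x \<and> c k = x)"

lemma CR_iff: "x \<in> CR X f \<longleftrightarrow> x \<in> X \<and> (\<forall>\<delta>>0. has_delta_cycle X f \<delta> x)"
  unfolding CR_def has_delta_cycle_def by blast

lemma CR_subset: "CR X f \<subseteq> X"
  by (auto simp: CR_iff)

lemma cr_rel_iff_CR_chains:
  "cr_rel X f x y \<longleftrightarrow> x \<in> CR X f \<and> y \<in> CR X f \<and>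
     (\<forall>\<delta>>0. \<exists>m>0. \<exists>N>0. \<forall>n\<ge>N. \<exists>xs ys.
        CR_chain X f \<delta> xs (m * n) x y \<and> CR_chain X f \<delta> ys (m * n) y x)"
  unfolding cr_rel_def CR_chain_def by (intro conj_cong refl all_cong ex_cong) blast

lemma cr_rel_in_CR: "cr_rel X f x y \<Longrightarrow> x \<in> CR X f \<and> y \<in> CR X f"
  unfolding cr_rel_def by blast

lemma delta_chain_mono: "delta_chain X f \<delta> c k \<Longrightarrow> \<delta> \<le> \<delta>' \<Longrightarrow> delta_chain X f \<delta>' c k"
  unfolding delta_chain_def by force

lemma delta_chain_in: "delta_chain X f \<delta> c k \<Longrightarrow> i \<le> k \<Longrightarrow> c i \<in> X"
  unfolding delta_chain_def by blast

lemma delta_chain_prefix: "delta_chain X f \<delta> c k \<Longrightarrow> j \<le> k \<Longrightarrow> delta_chain X f \<delta> c j"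
  unfolding delta_chain_def by auto

lemma delta_chain_suffix:
  "delta_chain X f \<delta> c k \<Longrightarrow> j \<le> k \<Longrightarrow> delta_chain X f \<delta> (\<lambda>i. c (j + i)) (k - j)"
  unfolding delta_chain_def by auto

lemma delta_chain_append:
  assumes "delta_chain X f \<delta> c k" "delta_chain X f \<delta> e l" "c k = e 0"
  shows "delta_chain X f \<delta> (\<lambda>i. if i \<le> k then c i else e (i - k)) (k + l)"
  unfolding delta_chain_def
proof (intro conjI allI impI)
  fix i assume "i \<le> k + l"
  then show "(if i \<le> k then c i else e (i - k)) \<in> X"
    using assms unfolding delta_chain_def by auto
next
  fix i assume i: "i < k + l"
  show "dist (f (if i \<le> k then c i else e (i - k)))
      (if Suc i \<le> k then c (Suc i) else e (Suc i - k)) \<le> \<delta>"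
  proof (cases "i < k")
    case True
    then show ?thesis using assms unfolding delta_chain_def by auto
  next
    case False
    then have "Suc i - k = Suc (i - k)" "i - k < l" using i by auto
    then show ?thesis using False assms unfolding delta_chain_def by (cases "i = k") auto
  qed
qed

lemma CR_chain_append:
  assumes "CR_chain X f \<delta> c k a b" "CR_chain X f \<delta> e l b z"
  shows "CR_chain X f \<delta> (\<lambda>i. if i \<le> k then c i else e (i - k)) (k + l) a z"
  using assms delta_chain_append[of X f \<delta> c k e l] unfolding CR_chain_def by auto

lemma CR_chain_repeat:
  assumes "CR_chain X f \<delta> c k x x"
  shows "\<exists>c'. CR_chain X f \<delta> c' (k * n) x x"
proof (induction n)
  case 0
  have "x \<in> CR X f" using assms unfolding CR_chain_def by auto
  then have "CR_chain X f \<delta> (\<lambda>_. x) 0 x x"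
    using CR_subset unfolding CR_chain_def delta_chain_def by auto
  then show ?case by auto
next
  case (Suc n)
  then obtain c' where "CR_chain X f \<delta> c' (k * n) x x" by auto
  from CR_chain_append[OF this assms] show ?case by (metis add.commute mult_Suc_right)
qed

lemma has_delta_cycle_mono: "has_delta_cycle X f \<delta> x \<Longrightarrow> \<delta> \<le> \<delta>' \<Longrightarrow> has_delta_cycle X f \<delta>' x"
  unfolding has_delta_cycle_def using delta_chain_mono by blast

lemma has_delta_cycle_in: "has_delta_cycle X f \<delta> x \<Longrightarrow> x \<in> X"
  unfolding has_delta_cycle_def by (metis delta_chain_in le0)

lemma has_delta_cycle_rotate:
  assumes c: "delta_chain X f \<delta> c k" "c 0 = c k" and "1 \<le> k" "j \<le> k"
  shows "has_delta_cycle X f \<delta> (c j)"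
proof -
  let ?r = "\<lambda>i. if i \<le> k - j then c (j + i) else c (i - (k - j))"
  have "delta_chain X f \<delta> ?r (k - j + j)"
    using delta_chain_append[OF delta_chain_suffix[OF c(1) \<open>j \<le> k\<close>] delta_chain_prefix[OF c(1) \<open>j \<le> k\<close>]]
      c \<open>j \<le> k\<close> by auto
  then have "delta_chain X f \<delta> ?r k"
    using \<open>j \<le> k\<close> by simp
  moreover have "?r k = c j"
    using c \<open>j \<le> k\<close> by (cases "j = 0") auto
  ultimately show ?thesis
    using \<open>1 \<le> k\<close> unfolding has_delta_cycle_def by (intro exI[of _ k] conjI exI[of _ ?r]) auto
qed

lemma delta_chain_shadow:
  assumes "uniformly_continuous_on X f" "\<delta> > 0"
  obtains \<eta> where "\<eta> > 0"
    "\<And>c e k. delta_chain X f \<eta> c k \<Longrightarrow> \<forall>i\<le>k. e i \<in> X \<and> dist (c i) (e i) < \<eta> \<Longrightarrow>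
       delta_chain X f \<delta> e k"
proof -
  obtain \<eta>\<^sub>0 where "\<eta>\<^sub>0 > 0"
    and \<eta>\<^sub>0: "\<And>a b. a \<in> X \<Longrightarrow> b \<in> X \<Longrightarrow> dist a b < \<eta>\<^sub>0 \<Longrightarrow> dist (f a) (f b) < \<delta> / 3"
    using assms unfolding uniformly_continuous_on_def
    by (metis divide_pos_pos zero_less_numeral)
  define \<eta> where "\<eta> = min \<eta>\<^sub>0 (\<delta> / 3)"
  have "delta_chain X f \<delta> e k"
    if c: "delta_chain X f \<eta> c k" and e: "\<forall>i\<le>k. e i \<in> X \<and> dist (c i) (e i) < \<eta>" for c e k
    unfolding delta_chain_def
  proof (intro conjI allI impI)
    fix i assume "i \<le> k"
    with e show "e i \<in> X" by blast
  next
    fix i assume "i < k"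
    then have "dist (f (e i)) (f (c i)) < \<delta> / 3"
      using \<eta>\<^sub>0 c e unfolding delta_chain_def \<eta>_def by (simp add: dist_commute)
    moreover have "dist (f (c i)) (c (Suc i)) \<le> \<delta> / 3"
      using c \<open>i < k\<close> unfolding delta_chain_def \<eta>_def by force
    moreover have "dist (c (Suc i)) (e (Suc i)) < \<delta> / 3"
      using e \<open>i < k\<close> unfolding \<eta>_def by force
    moreover have "dist (f (e i)) (e (Suc i))
        \<le> dist (f (e i)) (f (c i)) + dist (f (c i)) (c (Suc i)) + dist (c (Suc i)) (e (Suc i))"
      by (meson dist_triangle add_right_mono order_trans)
    ultimately show "dist (f (e i)) (e (Suc i)) \<le> \<delta>" by linarith
  qed
  moreover have "\<eta> > 0" using \<open>\<eta>\<^sub>0 > 0\<close> \<open>\<delta> > 0\<close> unfolding \<eta>_def by simp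
  ultimately show thesis using that by blast
qed

lemma delta_chain_image:
  assumes "uniformly_continuous_on X f" "f ` X \<subseteq> X" "\<delta> > 0"
  obtains \<delta>' where "\<delta>' > 0" "\<And>c k. delta_chain X f \<delta>' c k \<Longrightarrow> delta_chain X f \<delta> (f \<circ> c) k"
proof -
  obtain \<eta> where "\<eta> > 0" and \<eta>: "\<And>a b. a \<in> X \<Longrightarrow> b \<in> X \<Longrightarrow> dist a b < \<eta> \<Longrightarrow> dist (f a) (f b) < \<delta>"
    using assms(1,3) unfolding uniformly_continuous_on_def by blast
  have "delta_chain X f \<delta> (f \<circ> c) k" if c: "delta_chain X f (\<eta> / 2) c k" for c k
    unfolding delta_chain_def
  proof (intro conjI allI impI)
    fix i assume "i \<le> k"
    then show "(f \<circ> c) i \<in> X" using c assms(2) unfolding delta_chain_def by auto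
  next
    fix i assume "i < k"
    then have "f (c i) \<in> X" "c (Suc i) \<in> X" "dist (f (c i)) (c (Suc i)) < \<eta>"
      using c assms(2) \<open>\<eta> > 0\<close> unfolding delta_chain_def by force+
    then show "dist (f ((f \<circ> c) i)) ((f \<circ> c) (Suc i)) \<le> \<delta>"
      using \<eta> by (simp add: less_imp_le)
  qed
  then show thesis using that[of "\<eta> / 2"] \<open>\<eta> > 0\<close> by simp
qed

lemma CR_image:
  assumes "uniformly_continuous_on X f" "f ` X \<subseteq> X" "x \<in> CR X f"
  shows "f x \<in> CR X f"
  unfolding CR_iff
proof (intro conjI allI impI)
  show "f x \<in> X" using assms(2,3) CR_subset by blast
  fix \<delta> :: real assume "\<delta> > 0"
  then obtain \<delta>' where "\<delta>' > 0" and image: "\<And>c k. delta_chain X f \<delta>' c k \<Longrightarrow> delta_chain X f \<delta> (f \<circ> c) k"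
    using delta_chain_image[OF assms(1,2)] by blast
  then obtain k c where "k \<ge> 1" "delta_chain X f \<delta>' c k" "c 0 = x" "c k = x"
    using assms(3) unfolding CR_iff has_delta_cycle_def by blast
  then show "has_delta_cycle X f \<delta> (f x)"
    unfolding has_delta_cycle_def using image by (intro exI[of _ k] conjI exI[of _ "f \<circ> c"]) auto
qed

lemma CR_chain_image:
  assumes "uniformly_continuous_on X f" "f ` X \<subseteq> X" "\<delta> > 0"
  obtains \<delta>' where "\<delta>' > 0"
    "\<And>c k a b. CR_chain X f \<delta>' c k a b \<Longrightarrow> CR_chain X f \<delta> (f \<circ> c) k (f a) (f b)"
proof -
  obtain \<delta>' where "\<delta>' > 0" "\<And>c k. delta_chain X f \<delta>' c k \<Longrightarrow> delta_chain X f \<delta> (f \<circ> c) k"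
    using delta_chain_image[OF assms] by blast
  then show thesis
    using that[of \<delta>'] CR_image[OF assms(1,2)] unfolding CR_chain_def by simp
qed

lemma mem_CR_if_near_cycles:
  assumes "uniformly_continuous_on X f" "x \<in> X"
    and near: "\<And>\<delta>. \<delta> > 0 \<Longrightarrow> \<exists>y. has_delta_cycle X f \<delta> y \<and> dist y x < \<delta>"
  shows "x \<in> CR X f"
  unfolding CR_iff
proof (intro conjI allI impI \<open>x \<in> X\<close>)
  fix \<delta> :: real assume "\<delta> > 0"
  then obtain \<eta> where "\<eta> > 0" and shadow:
    "\<And>c e k. delta_chain X f \<eta> c k \<Longrightarrow> \<forall>i\<le>k. e i \<in> X \<and> dist (c i) (e i) < \<eta> \<Longrightarrow>
       delta_chain X f \<delta> e k"
    using delta_chain_shadow[OF assms(1)] by metis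
  obtain y k c where "dist y x < \<eta>" "k \<ge> 1" "delta_chain X f \<eta> c k" "c 0 = y" "c k = y"
    using near[OF \<open>\<eta> > 0\<close>] unfolding has_delta_cycle_def by blast
  then have "\<forall>i\<le>k. (c(0 := x, k := x)) i \<in> X \<and> dist (c i) ((c(0 := x, k := x)) i) < \<eta>"
    using \<open>x \<in> X\<close> \<open>\<eta> > 0\<close> by (auto intro: delta_chain_in)
  then have "delta_chain X f \<delta> (c(0 := x, k := x)) k"
    using shadow \<open>delta_chain X f \<eta> c k\<close> by blast
  then show "has_delta_cycle X f \<delta> x"
    unfolding has_delta_cycle_def using \<open>k \<ge> 1\<close> by (intro exI[of _ k] conjI exI[of _ "c(0 := x, k := x)"]) auto
qed

lemma cycles_near_CR:
  assumes "compact X" "uniformly_continuous_on X f" "\<epsilon> > 0"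
  shows "\<exists>\<gamma>>0. \<forall>y. has_delta_cycle X f \<gamma> y \<longrightarrow> (\<exists>p\<in>CR X f. dist y p < \<epsilon>)"
proof (rule ccontr)
  assume "\<not> ?thesis"
  then have "\<forall>\<gamma>>0. \<exists>y. has_delta_cycle X f \<gamma> y \<and> (\<forall>p\<in>CR X f. \<epsilon> \<le> dist y p)"
    by (meson not_less)
  then have "\<forall>n. \<exists>y. has_delta_cycle X f (inverse (Suc n)) y \<and> (\<forall>p\<in>CR X f. \<epsilon> \<le> dist y p)"
    by (meson of_nat_0_less_iff inverse_positive_iff_positive zero_less_Suc)
  then obtain y where y: "\<And>n. has_delta_cycle X f (inverse (Suc n)) (y n)"
    and far: "\<And>n p. p \<in> CR X f \<Longrightarrow> \<epsilon> \<le> dist (y n) p"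
    by metis
  obtain l r where "l \<in> X" "strict_mono r" and lim: "(y \<circ> r) \<longlonglongrightarrow> l"
    using seq_compactE[OF compact_imp_seq_compact[OF \<open>compact X\<close>]] y has_delta_cycle_in by metis
  have mesh: "(\<lambda>n. inverse (real (Suc (r n)))) \<longlonglongrightarrow> 0"
    using LIMSEQ_subseq_LIMSEQ[OF LIMSEQ_inverse_real_of_nat \<open>strict_mono r\<close>] by (simp add: comp_def)
  have "l \<in> CR X f"
  proof (rule mem_CR_if_near_cycles[OF assms(2) \<open>l \<in> X\<close>])
    fix \<delta> :: real assume "\<delta> > 0"
    have "eventually (\<lambda>n. dist ((y \<circ> r) n) l < \<delta> \<and> inverse (real (Suc (r n))) < \<delta>) sequentially"
      using tendstoD[OF lim \<open>\<delta> > 0\<close>] tendstoD[OF mesh \<open>\<delta> > 0\<close>] by eventually_elim simp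
    then obtain n where "dist (y (r n)) l < \<delta>" "inverse (real (Suc (r n))) < \<delta>"
      using eventually_sequentially by auto
    then show "\<exists>y'. has_delta_cycle X f \<delta> y' \<and> dist y' l < \<delta>"
      using y has_delta_cycle_mono less_imp_le by blast
  qed
  obtain n where "dist ((y \<circ> r) n) l < \<epsilon>"
    using tendstoD[OF lim \<open>\<epsilon> > 0\<close>] eventually_sequentially by auto
  with far[OF \<open>l \<in> CR X f\<close>] show False by (simp add: not_le[symmetric])
qed

lemma CR_cycle_in_CR:
  assumes "compact X" "uniformly_continuous_on X f" "x \<in> CR X f" "\<delta> > 0"
  obtains k c where "k \<ge> 1" "CR_chain X f \<delta> c k x x"
proof -
  obtain \<eta> where "\<eta> > 0" and shadow:
    "\<And>c e k. delta_chain X f \<eta> c k \<Longrightarrow> \<forall>i\<le>k. e i \<in> X \<and> dist (c i) (e i) < \<eta> \<Longrightarrow>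
       delta_chain X f \<delta> e k"
    using delta_chain_shadow[OF assms(2,4)] by metis
  obtain \<gamma> where "\<gamma> > 0" and near: "\<And>y. has_delta_cycle X f \<gamma> y \<Longrightarrow> \<exists>p\<in>CR X f. dist y p < \<eta>"
    using cycles_near_CR[OF assms(1,2) \<open>\<eta> > 0\<close>] by blast
  obtain k c where "k \<ge> 1" "delta_chain X f (min \<gamma> \<eta>) c k" "c 0 = x" "c k = x"
    using assms(3) \<open>\<gamma> > 0\<close> \<open>\<eta> > 0\<close> unfolding CR_iff has_delta_cycle_def by (metis min_less_iff_conj)
  then have c\<gamma>: "delta_chain X f \<gamma> c k" and c\<eta>: "delta_chain X f \<eta> c k"
    by (auto elim: delta_chain_mono)
  have "\<exists>p. j \<le> k \<longrightarrow> p \<in> CR X f \<and> dist (c j) p < \<eta>" for j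
    using near has_delta_cycle_rotate[OF c\<gamma>, of j] \<open>k \<ge> 1\<close> \<open>c 0 = x\<close> \<open>c k = x\<close> by auto
  then obtain P where P: "\<And>j. j \<le> k \<Longrightarrow> P j \<in> CR X f \<and> dist (c j) (P j) < \<eta>"
    by metis
  let ?e = "P(0 := x, k := x)"
  have "\<forall>i\<le>k. ?e i \<in> CR X f \<and> dist (c i) (?e i) < \<eta>"
    using P assms(3) \<open>\<eta> > 0\<close> \<open>c 0 = x\<close> \<open>c k = x\<close> by auto
  then have "delta_chain X f \<delta> ?e k" "\<forall>i\<le>k. ?e i \<in> CR X f"
    using shadow[OF c\<eta>] CR_subset by blast+
  then show thesis
    using that[of k ?e] \<open>k \<ge> 1\<close> unfolding CR_chain_def by simp
qed

lemma cr_rel_refl: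
  assumes "compact X" "uniformly_continuous_on X f" "x \<in> CR X f"
  shows "cr_rel X f x x"
  unfolding cr_rel_iff_CR_chains
proof (intro conjI allI impI \<open>x \<in> CR X f\<close>)
  fix \<delta> :: real assume "\<delta> > 0"
  then obtain k c where "k \<ge> 1" "CR_chain X f \<delta> c k x x"
    using CR_cycle_in_CR[OF assms] by metis
  then show "\<exists>m>0. \<exists>N>0. \<forall>n\<ge>N. \<exists>xs ys. CR_chain X f \<delta> xs (m * n) x x \<and> CR_chain X f \<delta> ys (m * n) x x"
    using CR_chain_repeat by (intro exI[of _ k] conjI exI[of _ 1]) auto
qed

lemma cr_rel_sym: "cr_rel X f x y \<Longrightarrow> cr_rel X f y x"
  unfolding cr_rel_iff_CR_chains by meson

lemma cr_rel_trans:
  assumes "cr_rel X f x y" "cr_rel X f y z"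
  shows "cr_rel X f x z"
  unfolding cr_rel_iff_CR_chains
proof (intro conjI allI impI)
  show "x \<in> CR X f" "z \<in> CR X f" using assms cr_rel_in_CR by blast+
  fix \<delta> :: real assume "\<delta> > 0"
  obtain m\<^sub>1 N\<^sub>1 where "m\<^sub>1 > 0" and xy: "\<And>n. n \<ge> N\<^sub>1 \<Longrightarrow>
      \<exists>xs ys. CR_chain X f \<delta> xs (m\<^sub>1 * n) x y \<and> CR_chain X f \<delta> ys (m\<^sub>1 * n) y x"
    using assms(1) \<open>\<delta> > 0\<close> unfolding cr_rel_iff_CR_chains by blast
  obtain m\<^sub>2 N\<^sub>2 where "m\<^sub>2 > 0" and yz: "\<And>n. n \<ge> N\<^sub>2 \<Longrightarrow>
      \<exists>xs ys. CR_chain X f \<delta> xs (m\<^sub>2 * n) y z \<and> CR_chain X f \<delta> ys (m\<^sub>2 * n) z y"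
    using assms(2) \<open>\<delta> > 0\<close> unfolding cr_rel_iff_CR_chains by blast
  have "\<exists>xs ys. CR_chain X f \<delta> xs (m\<^sub>1 * m\<^sub>2 * n) x z \<and> CR_chain X f \<delta> ys (m\<^sub>1 * m\<^sub>2 * n) z x"
    if "n \<ge> N\<^sub>1 + N\<^sub>2" for n
  proof -
    define d where "d = n - N\<^sub>1"
    have n: "n = N\<^sub>1 + d" and "d \<ge> N\<^sub>2"
      using that unfolding d_def by simp_all
    have "m\<^sub>2 * N\<^sub>1 \<ge> N\<^sub>1" "m\<^sub>1 * d \<ge> d"
      using \<open>m\<^sub>1 > 0\<close> \<open>m\<^sub>2 > 0\<close> by simp_all
    then have "m\<^sub>2 * N\<^sub>1 \<ge> N\<^sub>1" "m\<^sub>1 * d \<ge> N\<^sub>2"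
      using \<open>d \<ge> N\<^sub>2\<close> by linarith+
    then obtain xs\<^sub>1 ys\<^sub>1 xs\<^sub>2 ys\<^sub>2 where
      xy\<^sub>1: "CR_chain X f \<delta> xs\<^sub>1 (m\<^sub>1 * (m\<^sub>2 * N\<^sub>1)) x y" "CR_chain X f \<delta> ys\<^sub>1 (m\<^sub>1 * (m\<^sub>2 * N\<^sub>1)) y x"
      and yz\<^sub>1: "CR_chain X f \<delta> xs\<^sub>2 (m\<^sub>2 * (m\<^sub>1 * d)) y z" "CR_chain X f \<delta> ys\<^sub>2 (m\<^sub>2 * (m\<^sub>1 * d)) z y"
      using xy yz by blast
    have "m\<^sub>1 * (m\<^sub>2 * N\<^sub>1) + m\<^sub>2 * (m\<^sub>1 * d) = m\<^sub>1 * m\<^sub>2 * n"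
      "m\<^sub>2 * (m\<^sub>1 * d) + m\<^sub>1 * (m\<^sub>2 * N\<^sub>1) = m\<^sub>1 * m\<^sub>2 * n"
      unfolding n by (simp_all add: algebra_simps)
    then show ?thesis
      using CR_chain_append[OF xy\<^sub>1(1) yz\<^sub>1(1)] CR_chain_append[OF yz\<^sub>1(2) xy\<^sub>1(2)] by metis
  qed
  then show "\<exists>m>0. \<exists>N>0. \<forall>n\<ge>N. \<exists>xs ys. CR_chain X f \<delta> xs (m * n) x z \<and> CR_chain X f \<delta> ys (m * n) z x"
    using \<open>m\<^sub>1 > 0\<close> \<open>m\<^sub>2 > 0\<close> by (intro exI[of _ "m\<^sub>1 * m\<^sub>2"] conjI exI[of _ "Suc (N\<^sub>1 + N\<^sub>2)"]) auto
qed

lemma cr_rel_image: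
  assumes "uniformly_continuous_on X f" "f ` X \<subseteq> X" "cr_rel X f x y"
  shows "cr_rel X f (f x) (f y)"
  unfolding cr_rel_iff_CR_chains
proof (intro conjI allI impI)
  fix \<delta> :: real assume "\<delta> > 0"
  then obtain \<delta>' where "\<delta>' > 0" and image:
    "\<And>c k a b. CR_chain X f \<delta>' c k a b \<Longrightarrow> CR_chain X f \<delta> (f \<circ> c) k (f a) (f b)"
    using CR_chain_image[OF assms(1,2)] by metis
  then obtain m N where "m > 0" "N > 0" and chains: "\<forall>n\<ge>N. \<exists>xs ys.
      CR_chain X f \<delta>' xs (m * n) x y \<and> CR_chain X f \<delta>' ys (m * n) y x"
    using assms(3) unfolding cr_rel_iff_CR_chains by blast
  have "\<exists>xs ys. CR_chain X f \<delta> xs (m * n) (f x) (f y) \<and> CR_chain X f \<delta> ys (m * n) (f y) (f x)"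
    if "n \<ge> N" for n
  proof -
    obtain xs ys where "CR_chain X f \<delta>' xs (m * n) x y" "CR_chain X f \<delta>' ys (m * n) y x"
      using chains \<open>n \<ge> N\<close> by blast
    then show ?thesis using image by blast
  qed
  then show "\<exists>m>0. \<exists>N>0. \<forall>n\<ge>N. \<exists>xs ys.
      CR_chain X f \<delta> xs (m * n) (f x) (f y) \<and> CR_chain X f \<delta> ys (m * n) (f y) (f x)"
    using \<open>m > 0\<close> \<open>N > 0\<close> by blast
qed (use CR_image[OF assms(1,2)] cr_rel_in_CR[OF assms(3)] in blast)+

lemma cr_rel_if_approximable:
  assumes "uniformly_continuous_on X f" "x \<in> CR X f" "y \<in> CR X f"
    and approx: "\<And>\<epsilon>. \<epsilon> > 0 \<Longrightarrow> \<exists>x' y'. cr_rel X f x' y' \<and> dist x' x < \<epsilon> \<and> dist y' y < \<epsilon>"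
  shows "cr_rel X f x y"
  unfolding cr_rel_iff_CR_chains
proof (intro conjI allI impI assms(2,3))
  fix \<delta> :: real assume "\<delta> > 0"
  then obtain \<eta> where "\<eta> > 0" and shadow:
    "\<And>c e k. delta_chain X f \<eta> c k \<Longrightarrow> \<forall>i\<le>k. e i \<in> X \<and> dist (c i) (e i) < \<eta> \<Longrightarrow>
       delta_chain X f \<delta> e k"
    using delta_chain_shadow[OF assms(1)] by metis
  have ends: "CR_chain X f \<delta> (c(0 := a, k := b)) k a b"
    if "CR_chain X f \<eta> c k a' b'" "k \<ge> 1" "a \<in> CR X f" "b \<in> CR X f" "dist a' a < \<eta>" "dist b' b < \<eta>"
    for c k a b a' b'
  proof -
    have "\<forall>i\<le>k. (c(0 := a, k := b)) i \<in> CR X f \<and> dist (c i) ((c(0 := a, k := b)) i) < \<eta>"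
      using that \<open>\<eta> > 0\<close> unfolding CR_chain_def by auto
    then have "delta_chain X f \<delta> (c(0 := a, k := b)) k"
      using shadow that(1) CR_subset unfolding CR_chain_def by blast
    with \<open>\<forall>i\<le>k. _ \<and> _\<close> show ?thesis
      using \<open>k \<ge> 1\<close> unfolding CR_chain_def by simp
  qed
  obtain x' y' where "cr_rel X f x' y'" "dist x' x < \<eta>" "dist y' y < \<eta>"
    using approx[OF \<open>\<eta> > 0\<close>] by blast
  then obtain m N where "m > 0" "N > 0" and chains: "\<forall>n\<ge>N. \<exists>xs ys.
      CR_chain X f \<eta> xs (m * n) x' y' \<and> CR_chain X f \<eta> ys (m * n) y' x'"
    using \<open>\<eta> > 0\<close> unfolding cr_rel_iff_CR_chains by blast
  have "\<exists>xs ys. CR_chain X f \<delta> xs (m * n) x y \<and> CR_chain X f \<delta> ys (m * n) y x" if "n \<ge> N" for n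
  proof -
    obtain xs ys where "CR_chain X f \<eta> xs (m * n) x' y'" "CR_chain X f \<eta> ys (m * n) y' x'"
      using chains \<open>n \<ge> N\<close> by blast
    moreover have "m * n \<ge> 1" using \<open>m > 0\<close> \<open>N > 0\<close> \<open>n \<ge> N\<close> by (simp add: Suc_le_eq)
    ultimately show ?thesis
      using ends assms(2,3) \<open>dist x' x < \<eta>\<close> \<open>dist y' y < \<eta>\<close> by blast
  qed
  then show "\<exists>m>0. \<exists>N>0. \<forall>n\<ge>N. \<exists>xs ys. CR_chain X f \<delta> xs (m * n) x y \<and> CR_chain X f \<delta> ys (m * n) y x"
    using \<open>m > 0\<close> \<open>N > 0\<close> by blast
qed

lemma cr_rel_closedin:
  assumes "uniformly_continuous_on X f"
  shows "closedin (top_of_set (CR X f \<times> CR X f)) {(x, y). cr_rel X f x y}"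
  unfolding closedin_limpt
proof (intro conjI allI impI)
  show "{(x, y). cr_rel X f x y} \<subseteq> CR X f \<times> CR X f"
    using cr_rel_in_CR by blast
  fix p assume p: "p islimpt {(x, y). cr_rel X f x y} \<and> p \<in> CR X f \<times> CR X f"
  obtain x y where "p = (x, y)" by fastforce
  have "\<exists>x' y'. cr_rel X f x' y' \<and> dist x' x < \<epsilon> \<and> dist y' y < \<epsilon>" if "\<epsilon> > 0" for \<epsilon>
  proof -
    obtain x' y' where "cr_rel X f x' y'" "dist (x', y') (x, y) < \<epsilon>"
      using p \<open>\<epsilon> > 0\<close> unfolding islimpt_approachable \<open>p = (x, y)\<close> by blast
    then show ?thesis
      using dist_fst_le[of "(x', y')" "(x, y)"] dist_snd_le[of "(x', y')" "(x, y)"]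
      by (fastforce intro: le_less_trans)
  qed
  then show "p \<in> {(x, y). cr_rel X f x y}"
    using cr_rel_if_approximable[OF assms] p \<open>p = (x, y)\<close> by auto
qed

theorem lemma3p1:
  fixes X :: "'a::metric_space set" and f :: "'a \<Rightarrow> 'a"
  assumes "compact X" and "continuous_on X f" and "f ` X \<subseteq> X"
  shows "equiv (CR X f) {(x, y). cr_rel X f x y}
     \<and> closedin (top_of_set (CR X f \<times> CR X f)) {(x, y). cr_rel X f x y}
     \<and> (\<lambda>(x, y). (f x, f y)) ` {(x, y). cr_rel X f x y} \<subseteq> {(x, y). cr_rel X f x y}"
proof (intro conjI)
  have uc: "uniformly_continuous_on X f"
    using assms(2,1) by (rule compact_uniformly_continuous)
  show "equiv (CR X f) {(x, y). cr_rel X f x y}"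
  proof (rule equivI)
    show "{(x, y). cr_rel X f x y} \<subseteq> CR X f \<times> CR X f"
      using cr_rel_in_CR by blast
    show "refl_on (CR X f) {(x, y). cr_rel X f x y}"
      by (rule refl_onI) (simp add: cr_rel_refl[OF assms(1) uc])
    show "sym {(x, y). cr_rel X f x y}"
      by (rule symI) (simp add: cr_rel_sym)
    show "trans {(x, y). cr_rel X f x y}"
      by (rule transI) (auto intro: cr_rel_trans)
  qed
  show "closedin (top_of_set (CR X f \<times> CR X f)) {(x, y). cr_rel X f x y}"
    using uc by (rule cr_rel_closedin)
  show "(\<lambda>(x, y). (f x, f y)) ` {(x, y). cr_rel X f x y} \<subseteq> {(x, y). cr_rel X f x y}"
    using cr_rel_image[OF uc assms(3)] by auto
qed

end
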